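(* Let $X$ be a finite set and $f$ a closure operator on $X$. The set $S(f)$ of closed sets of $f$ is a chain with respect to set inclusion if and only if there is a weak order $\succeq$ on $X$ generating $f$, i.e. such that $f(A)=H(\succeq,h_A)$ for every $A\subseteq X$. Moreover, the weak order generating $f$ is unique.
   Context: A closure operator on $X$ is a map $f:2^X\to 2^X$ with $A\subseteq f(A)$, $f(\emptyset)=\emptyset$, $f(f(A))=f(A)$, and $A\subseteq B\Rightarrow f(A)\subseteq f(B)$; $S(f)=\{A: f(A)=A\}$. A weak order is a complete and transitive binary relation. For a weak order $\succeq$ and $A\subseteq X$, $h_A(\succeq)=\{x\in A: x\succeq y\ \forall y\in A\}$; for nonempty $A$, $H(\succeq,h_A)=\{x\in X: h_A(\succeq)\succeq x\}$ (i.e. $x$ is weakly below the $\succeq$-maximal elements of $A$), and $H(\succeq,h_\emptyset)=\emptyset$. *)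

theory Defs
  imports Main
begin

definition closure_operator :: "'a set \<Rightarrow> ('a set \<Rightarrow> 'a set) \<Rightarrow> bool" where
  "closure_operator X f \<longleftrightarrow>
     (\<forall>A. A \<subseteq> X \<longrightarrow> f A \<subseteq> X) \<and>
     (\<forall>A. A \<subseteq> X \<longrightarrow> A \<subseteq> f A) \<and>
     f {} = {} \<and>
     (\<forall>A. A \<subseteq> X \<longrightarrow> f (f A) = f A) \<and>
     (\<forall>A B. A \<subseteq> B \<and> B \<subseteq> X \<longrightarrow> f A \<subseteq> f B)"

definition closed_sets :: "'a set \<Rightarrow> ('a set \<Rightarrow> 'a set) \<Rightarrow> 'a set set" where
  "closed_sets X f = {A. A \<subseteq> X \<and> f A = A}"

text \<open>A weak order on X: a complete and transitive relation on X; (x,y) \<in> R means x \<succeq> y.\<close>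
definition weak_order_on :: "'a set \<Rightarrow> ('a \<times> 'a) set \<Rightarrow> bool" where
  "weak_order_on X R \<longleftrightarrow> R \<subseteq> X \<times> X \<and>
     (\<forall>x\<in>X. \<forall>y\<in>X. (x, y) \<in> R \<or> (y, x) \<in> R) \<and> trans R"

definition hmax :: "('a \<times> 'a) set \<Rightarrow> 'a set \<Rightarrow> 'a set" where
  "hmax R A = {x \<in> A. \<forall>y\<in>A. (x, y) \<in> R}"

definition Hset :: "'a set \<Rightarrow> ('a \<times> 'a) set \<Rightarrow> 'a set \<Rightarrow> 'a set" where
  "Hset X R A = (if A = {} then {} else {x \<in> X. \<exists>z\<in>hmax R A. (z, x) \<in> R})"

definition generates :: "'a set \<Rightarrow> ('a \<times> 'a) set \<Rightarrow> ('a set \<Rightarrow> 'a set) \<Rightarrow> bool" where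
  "generates X R f \<longleftrightarrow> (\<forall>A. A \<subseteq> X \<longrightarrow> f A = Hset X R A)"

end

theory Submission
  imports Defs
begin

text \<open>For a weak order \<succeq>, H(\<succeq>, h_A) is the lower set {x. a \<succeq> x} of any \<succeq>-maximal a in A.
  Hence a generating order is determined by f on singletons, y \<succeq> x iff x \<in> f {y}; and
  every nonempty closed set is the lower set of a single point, and lower sets of a weak order
  are nested. Conversely, if the closed sets form a chain, the sets f {a} for a in a finite
  nonempty A form a finite chain; its largest member contains A and therefore equals f A, so
  f A is the lower set of a for the order read off from singletons.\<close>

lemma
  assumes "closure_operator X f" and "A \<subseteq> X"
  shows closure_operator_subset: "f A \<subseteq> X"
    and closure_operator_extensive: "A \<subseteq> f A"
    and closure_operator_idem: "f (f A) = f A"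
  using assms by (simp_all add: closure_operator_def)

lemma closure_operator_empty: "closure_operator X f \<Longrightarrow> f {} = {}"
  by (simp add: closure_operator_def)

lemma closure_operator_mono:
  "closure_operator X f \<Longrightarrow> A \<subseteq> B \<Longrightarrow> B \<subseteq> X \<Longrightarrow> f A \<subseteq> f B"
  unfolding closure_operator_def by blast

lemma closure_subset_closure:
  assumes "closure_operator X f" and "B \<subseteq> X" and "A \<subseteq> f B"
  shows "f A \<subseteq> f B"
  using closure_operator_mono[OF assms(1,3) closure_operator_subset[OF assms(1,2)]]
  by (simp add: closure_operator_idem[OF assms(1,2)])

lemma closure_in_closed_sets:
  "closure_operator X f \<Longrightarrow> A \<subseteq> X \<Longrightarrow> f A \<in> closed_sets X f"
  unfolding closed_sets_def by (simp add: closure_operator_subset closure_operator_idem)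

lemma closure_finite_eq_closure_singleton:
  assumes "closure_operator X f" and "chain\<^sub>\<subseteq> (closed_sets X f)"
    and "finite A" and "A \<noteq> {}" and "A \<subseteq> X"
  obtains a where "a \<in> A" and "f A = f {a}"
proof -
  let ?\<B> = "(\<lambda>a. f {a}) ` A"
  have "?\<B> \<subseteq> closed_sets X f"
    using closure_in_closed_sets[OF assms(1)] \<open>A \<subseteq> X\<close> by blast
  then have "chain\<^sub>\<subseteq> ?\<B>"
    using assms(2) unfolding chain_subset_def by (meson subsetD)
  then have "\<Union>?\<B> \<in> ?\<B>"
    using assms(3,4) by (simp add: Union_in_chain chain_subset_alt_def)
  then obtain a where a: "a \<in> A" and top: "\<Union>?\<B> = f {a}"
    by blast
  have "b \<in> f {b}" if "b \<in> A" for b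
    using closure_operator_extensive[OF assms(1), of "{b}"] that \<open>A \<subseteq> X\<close> by blast
  then have "A \<subseteq> f {a}"
    using top by blast
  then have "f A \<subseteq> f {a}"
    using closure_subset_closure[OF assms(1), of "{a}" A] a \<open>A \<subseteq> X\<close> by blast
  moreover have "f {a} \<subseteq> f A"
    using closure_operator_mono[OF assms(1), of "{a}" A] a \<open>A \<subseteq> X\<close> by blast
  ultimately show thesis
    using that a by blast
qed

lemma weak_order_on_refl: "weak_order_on X R \<Longrightarrow> x \<in> X \<Longrightarrow> (x, x) \<in> R"
  unfolding weak_order_on_def by blast

lemma Hset_eq_Image_hmax:
  assumes "weak_order_on X R" and "z \<in> hmax R A"
  shows "Hset X R A = R `` {z}"
proof -
  have "A \<noteq> {}" and "\<And>z'. z' \<in> hmax R A \<Longrightarrow> (z, z') \<in> R"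
    using assms(2) unfolding hmax_def by auto
  moreover have "trans R" and "R \<subseteq> X \<times> X"
    using assms(1) unfolding weak_order_on_def by auto
  ultimately show ?thesis
    using assms(2) unfolding Hset_def by (auto dest: transD)
qed

lemma generated_closed_eq_Image:
  assumes "weak_order_on X R" and "generates X R f"
    and "C \<in> closed_sets X f" and "C \<noteq> {}"
  obtains z where "z \<in> X" and "C = R `` {z}"
proof -
  have "C = Hset X R C"
    using assms(2,3) unfolding generates_def closed_sets_def by auto
  with \<open>C \<noteq> {}\<close> obtain z where z: "z \<in> hmax R C"
    unfolding Hset_def by auto
  then have "z \<in> X"
    using assms(3) unfolding hmax_def closed_sets_def by auto
  with z \<open>C = Hset X R C\<close> show thesis
    using Hset_eq_Image_hmax[OF assms(1) z] that by simp
qed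

lemma chain_closed_sets_if_generates:
  assumes "weak_order_on X R" and "generates X R f"
  shows "chain\<^sub>\<subseteq> (closed_sets X f)"
  unfolding chain_subset_def
proof (intro ballI)
  fix C D assume C: "C \<in> closed_sets X f" and D: "D \<in> closed_sets X f"
  show "C \<subseteq> D \<or> D \<subseteq> C"
  proof (cases "C = {} \<or> D = {}")
    case False
    then obtain z w where "z \<in> X" "C = R `` {z}" "w \<in> X" "D = R `` {w}"
      using generated_closed_eq_Image[OF assms C] generated_closed_eq_Image[OF assms D]
      by metis
    moreover have "(z, w) \<in> R \<or> (w, z) \<in> R" and "trans R"
      using assms(1) \<open>z \<in> X\<close> \<open>w \<in> X\<close> unfolding weak_order_on_def by auto
    ultimately show ?thesis
      by (auto dest: transD)
  qed auto
qed

definition singleton_closure_order :: "'a set \<Rightarrow> ('a set \<Rightarrow> 'a set) \<Rightarrow> ('a \<times> 'a) set" where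
  "singleton_closure_order X f = {(y, x). y \<in> X \<and> x \<in> f {y}}"

lemma generating_weak_order_eq:
  assumes "weak_order_on X R" and "generates X R f"
  shows "R = singleton_closure_order X f"
proof -
  have "f {y} = R `` {y}" if "y \<in> X" for y
  proof -
    have "y \<in> hmax R {y}"
      using weak_order_on_refl[OF assms(1) that] unfolding hmax_def by simp
    moreover have "f {y} = Hset X R {y}"
      using assms(2) that unfolding generates_def by simp
    ultimately show ?thesis
      using Hset_eq_Image_hmax[OF assms(1)] by simp
  qed
  moreover have "R \<subseteq> X \<times> X"
    using assms(1) unfolding weak_order_on_def by auto
  ultimately show ?thesis
    unfolding singleton_closure_order_def by auto
qed

lemma weak_order_on_singleton_closure_order:
  assumes "closure_operator X f" and "chain\<^sub>\<subseteq> (closed_sets X f)"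
  shows "weak_order_on X (singleton_closure_order X f)"
proof -
  have in_closure: "y \<in> X \<Longrightarrow> y \<in> f {y}" and closure_in: "y \<in> X \<Longrightarrow> f {y} \<subseteq> X" for y
    using closure_operator_extensive[OF assms(1), of "{y}"] closure_operator_subset[OF assms(1), of "{y}"]
    by simp_all
  have "f {x} \<subseteq> f {y} \<or> f {y} \<subseteq> f {x}" if "x \<in> X" "y \<in> X" for x y
    using assms(2) closure_in_closed_sets[OF assms(1)] that unfolding chain_subset_def by simp
  moreover have "f {x} \<subseteq> f {y}" if "y \<in> X" "x \<in> f {y}" for x y
    using closure_subset_closure[OF assms(1)] that by simp
  ultimately show ?thesis
    using in_closure closure_in
    unfolding weak_order_on_def singleton_closure_order_def trans_def by blast
qed

lemma generates_singleton_closure_order: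
  assumes "finite X" and "closure_operator X f" and "chain\<^sub>\<subseteq> (closed_sets X f)"
  shows "generates X (singleton_closure_order X f) f"
  unfolding generates_def
proof (intro allI impI)
  fix A assume "A \<subseteq> X"
  let ?R = "singleton_closure_order X f"
  show "f A = Hset X ?R A"
  proof (cases "A = {}")
    case True
    then show ?thesis
      using closure_operator_empty[OF assms(2)] unfolding Hset_def by simp
  next
    case False
    have "finite A"
      using finite_subset[OF \<open>A \<subseteq> X\<close> assms(1)] .
    obtain a where a: "a \<in> A" and fA: "f A = f {a}"
      by (rule closure_finite_eq_closure_singleton[OF assms(2,3) \<open>finite A\<close> False \<open>A \<subseteq> X\<close>])
    have "A \<subseteq> f {a}"
      using closure_operator_extensive[OF assms(2) \<open>A \<subseteq> X\<close>] fA by simp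
    with a \<open>A \<subseteq> X\<close> have "a \<in> hmax ?R A"
      unfolding hmax_def singleton_closure_order_def by blast
    then have "Hset X ?R A = ?R `` {a}"
      by (rule Hset_eq_Image_hmax[OF weak_order_on_singleton_closure_order[OF assms(2,3)]])
    also have "\<dots> = f A"
      using fA a \<open>A \<subseteq> X\<close> unfolding singleton_closure_order_def by blast
    finally show ?thesis by simp
  qed
qed

theorem proposition4:
  fixes X :: "'a set" and f :: "'a set \<Rightarrow> 'a set"
  assumes "finite X" and "closure_operator X f"
  shows "(chain\<^sub>\<subseteq> (closed_sets X f) \<longleftrightarrow> (\<exists>R. weak_order_on X R \<and> generates X R f))
     \<and> (\<forall>R1 R2. weak_order_on X R1 \<and> generates X R1 f \<and> weak_order_on X R2 \<and> generates X R2 f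
                \<longrightarrow> R1 = R2)"
proof (intro conjI iffI allI impI)
  assume "chain\<^sub>\<subseteq> (closed_sets X f)"
  then show "\<exists>R. weak_order_on X R \<and> generates X R f"
    using weak_order_on_singleton_closure_order[OF assms(2)]
      generates_singleton_closure_order[OF assms] by blast
next
  assume "\<exists>R. weak_order_on X R \<and> generates X R f"
  then show "chain\<^sub>\<subseteq> (closed_sets X f)"
    using chain_closed_sets_if_generates by blast
next
  fix R1 R2
  assume "weak_order_on X R1 \<and> generates X R1 f \<and> weak_order_on X R2 \<and> generates X R2 f"
  then show "R1 = R2"
    using generating_weak_order_eq by metis
qed

end
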